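(* Let $n\ge 3$, $q=\frac{2n}{n-2}$, $\kappa=\frac{n-1}{n}$. Identify $S^1$ with $[-\pi,\pi]$ with endpoints identified, and let $\lambda=-1$ on $(-\pi,0)$, $\lambda=1$ on $(0,\pi)$. Let $N$ be a smooth positive function on $S^1$, $\gamma_N=-\frac{\int_{S^1}\lambda N}{\int_{S^1}N}$, and let $t,\eta,\mu\in\mathbb{R}$ and $\epsilon\in\mathbb{R}$. For $d>0$ consider $$-2\kappa q\,d^{-2q/n}\psi''-2\eta^2d^{-2q}\psi^{-q-1}-\kappa\big[(\gamma_N+\lambda)(1+\epsilon)+d^{-q}\mu\big]^2\psi^{-q-1}+\kappa(t+\lambda)^2\psi^{q-1}=0\quad\text{on }S^1.\qquad(\ast)$$ Suppose $\epsilon>0$. If $t$ is sufficiently close to $\gamma_N$ and $\mu=0$, then there is no $d>0$ for which $(\ast)$ has a positive solution $\psi\in W^{2,p}(S^1)$ ($p>1$) with $\psi(0)=1$.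
   Context: Equation $(\ast)$ is the reduction, for the data above, of the modified constraint system $R_h-|K|_h^2+(\mathrm{tr}_hK)^2=0$, $\mathrm{div}_hK-(1+\epsilon)\,d\,\mathrm{tr}_hK=0$; solutions of that modified reduced system correspond to pairs $(d,\psi)$ with $d>0$, $\psi$ a positive solution of $(\ast)$ and $\psi(0)=1$. *)

theory Defs
  imports "HOL-Analysis.Analysis"
begin

text \<open>Functions on the circle S^1 = [-pi,pi] with endpoints identified are
represented as 2*pi-periodic functions on the real line.\<close>

definition periodic2pi :: "(real \<Rightarrow> real) \<Rightarrow> bool" where
  "periodic2pi f \<longleftrightarrow> (\<forall>x. f (x + 2 * pi) = f x)"

text \<open>lambda = -1 on (-pi,0), 1 on (0,pi) (extended periodically; its value at the
two points 0, pi is irrelevant, set to 0).\<close>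
definition lam :: "real \<Rightarrow> real" where
  "lam x = (if sin x < 0 then -1 else if sin x > 0 then 1 else 0)"

definition smooth_circle :: "(real \<Rightarrow> real) \<Rightarrow> bool" where
  "smooth_circle f \<longleftrightarrow> periodic2pi f \<and> (\<forall>k x. ((deriv ^^ k) f) differentiable (at x))"

definition gammaN :: "(real \<Rightarrow> real) \<Rightarrow> real" where
  "gammaN N = - (integral {-pi..pi} (\<lambda>x. lam x * N x)) / integral {-pi..pi} N"

text \<open>psi in W^{2,p}(S^1) (p > 1): in one dimension, psi is (represented by) a
periodic C^1 function whose derivative psi1 is absolutely continuous, i.e. an
indefinite integral of some psi2, with psi2 in L^p(S^1); psi2 is the weak second
derivative.\<close>
definition W2p_circle_with :: "real \<Rightarrow> (real \<Rightarrow> real) \<Rightarrow> (real \<Rightarrow> real) \<Rightarrow> bool" where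
  "W2p_circle_with p psi psi2 \<longleftrightarrow> periodic2pi psi \<and>
     psi2 \<in> borel_measurable lborel \<and>
     set_integrable lborel {-pi..pi} (\<lambda>x. \<bar>psi2 x\<bar> powr p) \<and>
     (\<exists>psi1. (\<forall>x. (psi has_real_derivative psi1 x) (at x)) \<and>
            (\<forall>a b. a \<le> b \<longrightarrow> (psi2 has_integral (psi1 b - psi1 a)) {a..b}))"

definition eqn_lhs :: "nat \<Rightarrow> (real \<Rightarrow> real) \<Rightarrow> real \<Rightarrow> real \<Rightarrow> real \<Rightarrow> real \<Rightarrow> real
    \<Rightarrow> (real \<Rightarrow> real) \<Rightarrow> (real \<Rightarrow> real) \<Rightarrow> real \<Rightarrow> real" where
  "eqn_lhs n N t eta mu eps d psi psi2 x =
     (let q = 2 * real n / (real n - 2); \<kappa> = (real n - 1) / real n in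
       - 2 * \<kappa> * q * d powr (- 2 * q / real n) * psi2 x
       - 2 * eta\<^sup>2 * d powr (- 2 * q) * psi x powr (- q - 1)
       - \<kappa> * ((gammaN N + lam x) * (1 + eps) + d powr (- q) * mu)\<^sup>2 * psi x powr (- q - 1)
       + \<kappa> * (t + lam x)\<^sup>2 * psi x powr (q - 1))"

definition pos_W2p_solution :: "nat \<Rightarrow> (real \<Rightarrow> real) \<Rightarrow> real \<Rightarrow> real \<Rightarrow> real \<Rightarrow> real \<Rightarrow> real
    \<Rightarrow> real \<Rightarrow> (real \<Rightarrow> real) \<Rightarrow> bool" where
  "pos_W2p_solution n N t eta mu eps d p psi \<longleftrightarrow>
     (\<forall>x. psi x > 0) \<and>
     (\<exists>psi2. W2p_circle_with p psi psi2 \<and>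
        (AE x in lborel. eqn_lhs n N t eta mu eps d psi psi2 x = 0))"

end

theory Submission
  imports Defs
begin

text \<open>With \<open>\<mu> = 0\<close> and \<open>\<psi> > 0\<close>, equation (*) says that \<open>\<psi>''\<close> has the sign of
\<open>\<kappa>((\<psi>\<^sup>q (t + \<lambda>))\<^sup>2 - ((\<gamma>\<^sub>N + \<lambda>)(1 + \<epsilon>))\<^sup>2) - 2\<eta>\<^sup>2 d\<^sup>-\<^sup>2\<^sup>q\<close>.
Since \<open>-1 < \<gamma>\<^sub>N < 1\<close> and \<open>\<epsilon> > 0\<close>, for \<open>t\<close> close to \<open>\<gamma>\<^sub>N\<close> we have
\<open>|t + \<lambda>| < |\<gamma>\<^sub>N + \<lambda>|(1 + \<epsilon>)\<close> on both half circles. A solution normalised by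
\<open>\<psi>(0) = 1\<close> attains its minimum at some \<open>x\<^sub>0\<close> with \<open>\<psi>(x\<^sub>0) \<le> 1\<close>, so near \<open>x\<^sub>0\<close>
the bracket is uniformly negative and \<open>\<psi>'' \<le> -c < 0\<close> almost everywhere. Together with
\<open>\<psi>'(x\<^sub>0) = 0\<close> this makes \<open>\<psi>\<close> strictly decrease to the right of \<open>x\<^sub>0\<close>, contradicting
minimality.\<close>

lemma periodic2pi_shift_int:
  assumes "periodic2pi f"
  shows "f (x + 2 * pi * of_int k) = f x"
proof (induction k rule: int_induct[where k = 0])
  case (step1 i)
  have "f (x + 2 * pi * of_int (i + 1)) = f ((x + 2 * pi * of_int i) + 2 * pi)"
    by (simp add: algebra_simps)
  with assms step1 show ?case by (simp add: periodic2pi_def)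
next
  case (step2 i)
  have "f (x + 2 * pi * of_int i) = f ((x + 2 * pi * of_int (i - 1)) + 2 * pi)"
    by (simp add: algebra_simps)
  with assms step2 show ?case by (simp add: periodic2pi_def)
qed simp

lemma periodic2pi_attains_min:
  assumes per: "periodic2pi f" and cont: "continuous_on UNIV f"
  obtains x0 where "\<And>y. f x0 \<le> f y"
proof -
  obtain x0 where x0: "\<And>y. y \<in> {-pi..pi} \<Longrightarrow> f x0 \<le> f y"
    using continuous_attains_inf[OF compact_Icc _ continuous_on_subset[OF cont]] pi_ge_zero
    by (metis atLeastAtMost_iff neg_le_0_iff_le order.trans subset_UNIV)
  have "f x0 \<le> f y" for y
  proof -
    define k where "k = floor ((y + pi) / (2 * pi))"
    have "of_int k \<le> (y + pi) / (2 * pi)" "(y + pi) / (2 * pi) < of_int k + 1"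
      unfolding k_def by linarith+
    then have "y - 2 * pi * of_int k \<in> {-pi..pi}"
      using pi_gt_zero by (simp add: field_simps)
    then have "f x0 \<le> f (y - 2 * pi * of_int k + 2 * pi * of_int k)"
      using x0 periodic2pi_shift_int[OF per] by presburger
    then show ?thesis by simp
  qed
  then show thesis by (rule that)
qed

lemma smooth_circle_continuous: "smooth_circle N \<Longrightarrow> continuous_on UNIV N"
  unfolding smooth_circle_def
  by (metis funpow_0 continuous_at_imp_continuous_on differentiable_imp_continuous_within)

lemma integral_pos_continuous:
  fixes f :: "real \<Rightarrow> real"
  assumes cont: "continuous_on {a..b} f" and pos: "\<And>x. x \<in> {a..b} \<Longrightarrow> f x > 0" and "a < b"
  shows "integral {a..b} f > 0"
proof -
  obtain x0 where x0: "x0 \<in> {a..b}" "\<And>y. y \<in> {a..b} \<Longrightarrow> f x0 \<le> f y"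
    using continuous_attains_inf[OF compact_Icc _ cont] \<open>a < b\<close> by auto
  have "(b - a) * f x0 \<le> integral {a..b} f"
    using has_integral_le[OF has_integral_const_real integrable_integral[OF
          integrable_continuous_interval[OF cont]]] x0 \<open>a < b\<close> by simp
  moreover have "(b - a) * f x0 > 0"
    using pos[OF x0(1)] \<open>a < b\<close> by simp
  ultimately show ?thesis by linarith
qed

lemma lam_neg: "-pi < x \<Longrightarrow> x < 0 \<Longrightarrow> lam x = -1"
  using sin_gt_zero[of "-x"] by (simp add: lam_def)

lemma lam_pos: "0 < x \<Longrightarrow> x < pi \<Longrightarrow> lam x = 1"
  using sin_gt_zero[of x] by (simp add: lam_def)

lemma lam_sign: "sin x \<noteq> 0 \<Longrightarrow> lam x \<in> {-1, 1}"
  by (simp add: lam_def)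

lemma gammaN_bounds:
  assumes cont: "continuous_on UNIV N" and pos: "\<And>x. N x > 0"
  shows "-1 < gammaN N" "gammaN N < 1"
proof -
  define Q where "Q = integral {-pi..0} N"
  define P where "P = integral {0..pi} N"
  have Q: "(N has_integral Q) {-pi..0}" "Q > 0"
    unfolding Q_def using continuous_on_subset[OF cont] pos
    by (auto intro: integrable_continuous_interval integral_pos_continuous)
  have P: "(N has_integral P) {0..pi}" "P > 0"
    unfolding P_def using continuous_on_subset[OF cont] pos
    by (auto intro: integrable_continuous_interval integral_pos_continuous)
  have lam_Q: "((\<lambda>x. lam x * N x) has_integral -Q) {-pi..0}"
    using has_integral_spike_finite_eq[of "{-pi, 0}" "{-pi..0}" "\<lambda>x. lam x * N x" "\<lambda>x. - N x"]
      has_integral_neg[OF Q(1)] lam_neg by force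
  have lam_P: "((\<lambda>x. lam x * N x) has_integral P) {0..pi}"
    using has_integral_spike_finite_eq[of "{0, pi}" "{0..pi}" "\<lambda>x. lam x * N x" N] P(1) lam_pos
    by force
  have "((\<lambda>x. lam x * N x) has_integral -Q + P) {-pi..pi}"
    using has_integral_combine[OF _ _ lam_Q lam_P] pi_ge_zero by simp
  moreover have "(N has_integral Q + P) {-pi..pi}"
    using has_integral_combine[OF _ _ Q(1) P(1)] pi_ge_zero by simp
  ultimately have "gammaN N = (Q - P) / (Q + P)"
    unfolding gammaN_def by (simp add: integral_unique)
  moreover have "-1 < (Q - P) / (Q + P)" "(Q - P) / (Q + P) < 1"
    using Q(2) P(2) by (simp_all add: divide_simps)
  ultimately show "-1 < gammaN N" "gammaN N < 1"
    by simp_all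
qed

lemma eqn_lhs_mu0_eq:
  fixes n :: nat
  defines "q \<equiv> 2 * real n / (real n - 2)" and "\<kappa> \<equiv> (real n - 1) / real n"
  assumes pos: "psi x > 0"
  shows "eqn_lhs n N t eta 0 eps d psi psi2 x =
    psi x powr (- q - 1) * (\<kappa> * ((psi x powr q * (t + lam x))\<^sup>2
        - ((gammaN N + lam x) * (1 + eps))\<^sup>2) - 2 * eta\<^sup>2 * d powr (- 2 * q))
    - 2 * \<kappa> * q * d powr (- 2 * q / real n) * psi2 x"
proof -
  have "psi x powr (q - 1) = (psi x powr q)\<^sup>2 * psi x powr (- q - 1)"
    using pos by (simp add: power2_eq_square powr_add[symmetric])
  then show ?thesis
    unfolding eqn_lhs_def Let_def q_def[symmetric] \<kappa>_def[symmetric]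
    by (simp add: power2_eq_square algebra_simps)
qed

lemma eqn_lhs_mu0_psi2_le:
  fixes n :: nat
  defines "q \<equiv> 2 * real n / (real n - 2)" and "\<kappa> \<equiv> (real n - 1) / real n"
  assumes "n \<ge> 3" and "d > 0" and eqn: "eqn_lhs n N t eta 0 eps d psi psi2 x = 0"
    and "psi x > 0" and "psi x \<le> 2" and "h \<ge> 0"
    and bracket: "(psi x powr q * (t + lam x))\<^sup>2 - ((gammaN N + lam x) * (1 + eps))\<^sup>2 \<le> - h"
  shows "2 * \<kappa> * q * d powr (- 2 * q / real n) * psi2 x \<le> - (\<kappa> * h * 2 powr (- q - 1))"
proof -
  let ?B = "(psi x powr q * (t + lam x))\<^sup>2 - ((gammaN N + lam x) * (1 + eps))\<^sup>2"
  have "q > 0" "\<kappa> > 0" using \<open>n \<ge> 3\<close> by (simp_all add: q_def \<kappa>_def)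
  have "0 \<le> 2 * eta\<^sup>2 * d powr (- 2 * q)" by simp
  then have kh: "\<kappa> * h \<le> 2 * eta\<^sup>2 * d powr (- 2 * q) - \<kappa> * ?B"
    using mult_left_mono[OF bracket, of \<kappa>] \<open>\<kappa> > 0\<close> by linarith
  have "2 powr (- q - 1) \<le> psi x powr (- q - 1)"
    using \<open>psi x > 0\<close> \<open>psi x \<le> 2\<close> \<open>q > 0\<close> by (intro powr_mono2') auto
  moreover have "0 \<le> \<kappa> * h"
    using \<open>\<kappa> > 0\<close> \<open>h \<ge> 0\<close> by simp
  ultimately have "\<kappa> * h * 2 powr (- q - 1) \<le>
      (2 * eta\<^sup>2 * d powr (- 2 * q) - \<kappa> * ?B) * psi x powr (- q - 1)"
    using kh by (intro mult_mono) auto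
  then show ?thesis
    using eqn eqn_lhs_mu0_eq[of psi x n N t eta eps d psi2] \<open>psi x > 0\<close>
    unfolding q_def \<kappa>_def by (simp add: algebra_simps)
qed

lemma abs_add_less_of_near:
  fixes g t eps \<sigma> :: real
  assumes "\<bar>t - g\<bar> < eps * \<bar>g + \<sigma>\<bar>" and "eps \<ge> 0"
  shows "\<bar>t + \<sigma>\<bar> < \<bar>(g + \<sigma>) * (1 + eps)\<bar>"
proof -
  have "\<bar>t + \<sigma>\<bar> \<le> \<bar>t - g\<bar> + \<bar>g + \<sigma>\<bar>"
    using abs_triangle_ineq[of "t - g" "g + \<sigma>"] by simp
  also have "\<dots> < \<bar>g + \<sigma>\<bar> * (1 + eps)"
    using assms(1) by (simp add: algebra_simps)
  also have "\<dots> = \<bar>(g + \<sigma>) * (1 + eps)\<bar>"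
    using \<open>eps \<ge> 0\<close> by (simp add: abs_mult)
  finally show ?thesis .
qed

lemma eventually_bracket_neg:
  fixes psi :: "real \<Rightarrow> real" and q t g eps :: real
  assumes cont: "isCont psi x0" and "psi x0 > 0" and "psi x0 \<le> 1" and "q > 0"
    and margin: "\<And>\<sigma>. \<sigma> \<in> {-1, 1} \<Longrightarrow> \<bar>t + \<sigma>\<bar> < \<bar>(g + \<sigma>) * (1 + eps)\<bar>"
  obtains h where "h > 0" and "\<forall>\<^sub>F x in nhds x0. psi x < 2 \<and>
    (\<forall>\<sigma>\<in>{-1, 1}. (psi x powr q * (t + \<sigma>))\<^sup>2 - ((g + \<sigma>) * (1 + eps))\<^sup>2 < - h)"
proof -
  define F where "F \<sigma> x = (psi x powr q * (t + \<sigma>))\<^sup>2 - ((g + \<sigma>) * (1 + eps))\<^sup>2" for \<sigma> x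
  have psi_lim: "(psi \<longlongrightarrow> psi x0) (nhds x0)"
    using cont by (simp add: isCont_def tendsto_at_iff_tendsto_nhds)
  have F_lim: "(F \<sigma> \<longlongrightarrow> F \<sigma> x0) (nhds x0)" for \<sigma>
    unfolding F_def using \<open>psi x0 > 0\<close> by (intro tendsto_intros psi_lim) auto
  have F_neg: "F \<sigma> x0 < 0" if "\<sigma> \<in> {-1, 1}" for \<sigma>
  proof -
    have "(psi x0 powr q)\<^sup>2 \<le> 1"
      using \<open>psi x0 > 0\<close> \<open>psi x0 \<le> 1\<close> \<open>q > 0\<close> by (simp add: power_le_one powr_le1)
    then have "(psi x0 powr q * (t + \<sigma>))\<^sup>2 \<le> (t + \<sigma>)\<^sup>2"
      by (simp add: power_mult_distrib mult_left_le_one_le)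
    also have "\<dots> < ((g + \<sigma>) * (1 + eps))\<^sup>2"
      using margin[OF that] by (metis abs_le_square_iff not_le)
    finally show ?thesis by (simp add: F_def)
  qed
  define h where "h = - max (F 1 x0) (F (-1) x0) / 2"
  have "h > 0" using F_neg by (simp add: h_def)
  have "\<forall>\<^sub>F x in nhds x0. F \<sigma> x < - h" if "\<sigma> \<in> {-1, 1}" for \<sigma>
  proof (rule order_tendstoD(2)[OF F_lim])
    show "F \<sigma> x0 < - h"
      using F_neg[of 1] F_neg[of "-1"] that by (auto simp: h_def)
  qed
  then have "\<forall>\<^sub>F x in nhds x0. \<forall>\<sigma>\<in>{-1, 1}. F \<sigma> x < - h"
    by (intro eventually_ball_finite) auto
  moreover have "\<forall>\<^sub>F x in nhds x0. psi x < 2"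
    using order_tendstoD(2)[OF psi_lim] \<open>psi x0 \<le> 1\<close> by simp
  ultimately have "\<forall>\<^sub>F x in nhds x0. psi x < 2 \<and> (\<forall>\<sigma>\<in>{-1, 1}. F \<sigma> x < - h)"
    by eventually_elim blast
  with that[OF \<open>h > 0\<close>] show thesis
    by (simp only: F_def)
qed

lemma less_at_right_of_critical_point:
  fixes psi psi1 psi2 :: "real \<Rightarrow> real"
  assumes der: "\<And>x. (psi has_real_derivative psi1 x) (at x)"
    and int: "\<And>a b. a \<le> b \<Longrightarrow> (psi2 has_integral (psi1 b - psi1 a)) {a..b}"
    and "psi1 x0 = 0" and "negligible S" and "c > 0"
    and concave: "\<And>x. x \<in> {x0..y} - S \<Longrightarrow> psi2 x \<le> - c"
    and "x0 < y"
  shows "psi y < psi x0"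
proof (rule DERIV_neg_imp_decreasing_open[OF \<open>x0 < y\<close>])
  fix z assume "x0 < z" "z < y"
  define G where "G x = (if x \<in> S then - c else psi2 x)" for x
  have "(G has_integral (psi1 z - psi1 x0)) {x0..z}"
    using has_integral_spike[OF \<open>negligible S\<close> _ int] \<open>x0 < z\<close> by (simp add: G_def)
  moreover have "((\<lambda>x. - c) has_integral (z - x0) * (- c)) {x0..z}"
    using has_integral_const_real[of "- c" x0 z] \<open>x0 < z\<close> by simp
  moreover have "G x \<le> - c" if "x \<in> {x0..z}" for x
    using concave \<open>z < y\<close> that by (simp add: G_def)
  ultimately have "psi1 z - psi1 x0 \<le> (z - x0) * (- c)"
    by (rule has_integral_le)
  also have "\<dots> < 0"
    using \<open>x0 < z\<close> \<open>c > 0\<close> by (simp add: mult_pos_pos)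
  finally have "psi1 z < 0"
    using \<open>psi1 x0 = 0\<close> by simp
  then show "\<exists>l. (psi has_real_derivative l) (at z) \<and> l < 0"
    using der by blast
next
  show "continuous_on {x0..y} psi"
    using der by (meson DERIV_isCont continuous_at_imp_continuous_on)
qed

lemma negligible_sin_zero: "negligible {x::real. sin x = 0}"
proof -
  have "{x::real. sin x = 0} = (\<Union>i::int. {of_int i * pi})"
    by (auto simp: sin_zero_iff_int2)
  moreover have "negligible (\<Union>i::int. {of_int i * pi})"
    by (rule negligible_countable_Union) auto
  ultimately show ?thesis by simp
qed

lemma eqn_psi2_neg_near_min:
  assumes "n \<ge> 3" and "d > 0" and pos: "\<And>x. psi x > 0" and "isCont psi x0" and "psi x0 \<le> 1"
    and margin: "\<And>\<sigma>. \<sigma> \<in> {-1, 1} \<Longrightarrow> \<bar>t + \<sigma>\<bar> < \<bar>(gammaN N + \<sigma>) * (1 + eps)\<bar>"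
    and AE: "AE x in lborel. eqn_lhs n N t eta 0 eps d psi psi2 x = 0"
  obtains e c S where "e > 0" and "c > 0" and "negligible S"
    and "\<And>x. dist x x0 < e \<Longrightarrow> x \<notin> S \<Longrightarrow> psi2 x \<le> - c"
proof -
  define q where "q = 2 * real n / (real n - 2)"
  define \<kappa> where "\<kappa> = (real n - 1) / real n"
  define C where "C = 2 * \<kappa> * q * d powr (- 2 * q / real n)"
  have "q > 0" "\<kappa> > 0" using \<open>n \<ge> 3\<close> by (simp_all add: q_def \<kappa>_def)
  then have "C > 0" using \<open>d > 0\<close> by (simp add: C_def)
  obtain h where "h > 0" and "\<forall>\<^sub>F x in nhds x0. psi x < 2 \<and> (\<forall>\<sigma>\<in>{-1, 1}.
      (psi x powr q * (t + \<sigma>))\<^sup>2 - ((gammaN N + \<sigma>) * (1 + eps))\<^sup>2 < - h)"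
    using eventually_bracket_neg[OF \<open>isCont psi x0\<close> pos \<open>psi x0 \<le> 1\<close> \<open>q > 0\<close> margin] by blast
  then obtain e where "e > 0" and near: "\<And>x. dist x x0 < e \<Longrightarrow> psi x < 2 \<and> (\<forall>\<sigma>\<in>{-1, 1}.
      (psi x powr q * (t + \<sigma>))\<^sup>2 - ((gammaN N + \<sigma>) * (1 + eps))\<^sup>2 < - h)"
    unfolding eventually_nhds_metric by blast
  obtain S0 where "negligible S0" and S0: "{x. eqn_lhs n N t eta 0 eps d psi psi2 x \<noteq> 0} \<subseteq> S0"
    using AE_completion[OF AE] unfolding eventually_ae_filter_negligible by blast
  \<comment> \<open>At the zeros of \<open>sin\<close>, \<open>lam\<close> takes the junk value 0, so they are discarded too.\<close>
  define S where "S = S0 \<union> {x. sin x = 0}"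
  have "psi2 x \<le> - (\<kappa> * h * 2 powr (- q - 1) / C)" if "dist x x0 < e" "x \<notin> S" for x
  proof -
    have "lam x \<in> {-1, 1}" and eqn: "eqn_lhs n N t eta 0 eps d psi psi2 x = 0"
      using lam_sign S0 \<open>x \<notin> S\<close> by (auto simp: S_def)
    then have "psi x \<le> 2" and bracket:
      "(psi x powr q * (t + lam x))\<^sup>2 - ((gammaN N + lam x) * (1 + eps))\<^sup>2 \<le> - h"
      using near[OF \<open>dist x x0 < e\<close>] by auto
    from eqn_lhs_mu0_psi2_le[OF \<open>n \<ge> 3\<close> \<open>d > 0\<close> eqn pos \<open>psi x \<le> 2\<close> _ bracket[unfolded q_def]]
      \<open>h > 0\<close>
    have "C * psi2 x \<le> - (\<kappa> * h * 2 powr (- q - 1))"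
      unfolding C_def q_def \<kappa>_def by simp
    then show ?thesis
      using \<open>C > 0\<close> by (simp add: field_simps)
  qed
  moreover have "negligible S"
    using \<open>negligible S0\<close> negligible_sin_zero by (simp add: S_def)
  moreover have "\<kappa> * h * 2 powr (- q - 1) / C > 0"
    using \<open>C > 0\<close> \<open>\<kappa> > 0\<close> \<open>h > 0\<close> by simp
  ultimately show thesis
    using that[OF \<open>e > 0\<close>] by blast
qed

lemma no_normalised_pos_W2p_solution:
  assumes "n \<ge> 3" and "d > 0"
    and margin: "\<And>\<sigma>. \<sigma> \<in> {-1, 1} \<Longrightarrow> \<bar>t + \<sigma>\<bar> < \<bar>(gammaN N + \<sigma>) * (1 + eps)\<bar>"
  shows "\<not> (pos_W2p_solution n N t eta 0 eps d p psi \<and> psi 0 = 1)"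
proof
  assume "pos_W2p_solution n N t eta 0 eps d p psi \<and> psi 0 = 1"
  then obtain psi1 psi2 where pos: "\<And>x. psi x > 0" and "psi 0 = 1" and "periodic2pi psi"
    and der: "\<And>x. (psi has_real_derivative psi1 x) (at x)"
    and int: "\<And>a b. a \<le> b \<Longrightarrow> (psi2 has_integral (psi1 b - psi1 a)) {a..b}"
    and AE: "AE x in lborel. eqn_lhs n N t eta 0 eps d psi psi2 x = 0"
    unfolding pos_W2p_solution_def W2p_circle_with_def by metis
  have "continuous_on UNIV psi"
    using der by (meson DERIV_isCont continuous_at_imp_continuous_on)
  then obtain x0 where min: "\<And>y. psi x0 \<le> psi y"
    using periodic2pi_attains_min \<open>periodic2pi psi\<close> by blast
  then have "psi1 x0 = 0"
    using DERIV_local_min[OF der zero_less_one] by blast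
  have "psi x0 \<le> 1"
    using min[of 0] \<open>psi 0 = 1\<close> by simp
  obtain e c S where "e > 0" "c > 0" "negligible S"
    and concave: "\<And>x. dist x x0 < e \<Longrightarrow> x \<notin> S \<Longrightarrow> psi2 x \<le> - c"
    using eqn_psi2_neg_near_min[OF \<open>n \<ge> 3\<close> \<open>d > 0\<close> pos DERIV_isCont[OF der]
        \<open>psi x0 \<le> 1\<close> margin AE] by blast
  have "psi (x0 + e / 2) < psi x0"
    using \<open>e > 0\<close> concave
    by (intro less_at_right_of_critical_point[OF der int \<open>psi1 x0 = 0\<close> \<open>negligible S\<close> \<open>c > 0\<close>])
       (auto simp: dist_real_def)
  with min show False
    by (metis not_le)
qed

theorem proposition3p32:
  fixes n :: nat and N :: "real \<Rightarrow> real" and eta eps :: real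
  assumes "n \<ge> 3"
    and "smooth_circle N" and "\<forall>x. N x > 0"
    and "eps > 0"
  shows "\<exists>\<delta>>0. \<forall>t. \<bar>t - gammaN N\<bar> < \<delta> \<longrightarrow>
           (\<forall>d>0. \<forall>p>1. \<forall>psi. \<not> (pos_W2p_solution n N t eta 0 eps d p psi \<and> psi 0 = 1))"
proof -
  define g where "g = gammaN N"
  have g: "-1 < g" "g < 1"
    using gammaN_bounds[OF smooth_circle_continuous[OF assms(2)]] assms(3) by (simp_all add: g_def)
  define \<delta> where "\<delta> = eps * min (1 - g) (1 + g)"
  have "\<not> (pos_W2p_solution n N t eta 0 eps d p psi \<and> psi 0 = 1)"
    if "\<bar>t - g\<bar> < \<delta>" and "d > 0" for t d p psi
  proof (rule no_normalised_pos_W2p_solution[OF \<open>n \<ge> 3\<close> \<open>d > 0\<close>])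
    fix \<sigma> :: real assume "\<sigma> \<in> {-1, 1}"
    then have "\<delta> \<le> eps * \<bar>g + \<sigma>\<bar>"
      using \<open>eps > 0\<close> g by (auto simp: \<delta>_def intro!: mult_left_mono)
    then show "\<bar>t + \<sigma>\<bar> < \<bar>(gammaN N + \<sigma>) * (1 + eps)\<bar>"
      using abs_add_less_of_near[of t g eps \<sigma>] \<open>\<bar>t - g\<bar> < \<delta>\<close> \<open>eps > 0\<close> by (simp add: g_def)
  qed
  moreover have "\<delta> > 0"
    using g \<open>eps > 0\<close> by (simp add: \<delta>_def)
  ultimately show ?thesis
    unfolding g_def by blast
qed

end
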